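(* In the pure Call-by-Name $\lambda$-calculus, let $\rightsquigarrow_U$ be the unbiased iteration of head reduction (as in the context). If $M\to_\beta M'$ and not $M\rightsquigarrow_UM'$, then $\omega(M)=\omega(M')$.
   Context: Pure $\lambda$-terms $M::=x\mid\lambda x.M\mid MM$; $\to_\beta$ is the closure of $(\lambda x.M)N\mapsto M\{N/x\}$ under all contexts. Head reduction $\to_h$ is the closure of $\beta$ under head contexts $H::=[\,]\mid\lambda x.H\mid HM$. $\rightsquigarrow_U$: if $M\to_hM'$ then $M\rightsquigarrow_UM'$; if $M$ is $\to_h$-normal: $\lambda x.P\rightsquigarrow_U\lambda x.P'$ if $P\rightsquigarrow_UP'$; $PQ\rightsquigarrow_UP'Q$ if $P\rightsquigarrow_UP'$; $PQ\rightsquigarrow_UPQ'$ if $Q\rightsquigarrow_UQ'$. A head normal form is a term $\lambda x_1\dots x_n.xM_1\dots M_p$ ($n,p\ge0$). Partial $\lambda$-terms: $P::=\Omega\mid x\mid PP\mid\lambda x.P$. The partial normal form $\omega(M)$ is $\Omega$ if $M$ is not a head normal form, and $\lambda\vec x.x\,\omega(M_1)\dots\omega(M_p)$ if $M=\lambda\vec x.xM_1\dots M_p$. *)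

theory Defs
  imports Main
begin

(* Pure lambda-terms, with de Bruijn indices (terms are thus identified up to alpha) *)
datatype trm = Var nat | Lam trm | App trm trm

fun lift :: "trm \<Rightarrow> nat \<Rightarrow> trm" where
  "lift (Var i) k = (if i < k then Var i else Var (Suc i))"
| "lift (Lam t) k = Lam (lift t (Suc k))"
| "lift (App t u) k = App (lift t k) (lift u k)"

fun subst :: "trm \<Rightarrow> nat \<Rightarrow> trm \<Rightarrow> trm" where
  "subst (Var i) k s = (if k < i then Var (i - 1) else if i = k then s else Var i)"
| "subst (Lam t) k s = Lam (subst t (Suc k) (lift s 0))"
| "subst (App t u) k s = App (subst t k s) (subst u k s)"

inductive beta :: "trm \<Rightarrow> trm \<Rightarrow> bool" (infixl "\<rightarrow>\<^sub>\<beta>" 50) where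
  beta_root: "App (Lam t) s \<rightarrow>\<^sub>\<beta> subst t 0 s"
| beta_appL: "t \<rightarrow>\<^sub>\<beta> t' \<Longrightarrow> App t u \<rightarrow>\<^sub>\<beta> App t' u"
| beta_appR: "u \<rightarrow>\<^sub>\<beta> u' \<Longrightarrow> App t u \<rightarrow>\<^sub>\<beta> App t u'"
| beta_lam: "t \<rightarrow>\<^sub>\<beta> t' \<Longrightarrow> Lam t \<rightarrow>\<^sub>\<beta> Lam t'"

inductive hred :: "trm \<Rightarrow> trm \<Rightarrow> bool" (infixl "\<rightarrow>\<^sub>h" 50) where
  hred_root: "App (Lam t) s \<rightarrow>\<^sub>h subst t 0 s"
| hred_lam: "t \<rightarrow>\<^sub>h t' \<Longrightarrow> Lam t \<rightarrow>\<^sub>h Lam t'"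
| hred_appL: "t \<rightarrow>\<^sub>h t' \<Longrightarrow> App t u \<rightarrow>\<^sub>h App t' u"

definition hnormal :: "trm \<Rightarrow> bool" where
  "hnormal M \<longleftrightarrow> \<not> (\<exists>M'. M \<rightarrow>\<^sub>h M')"

inductive ured :: "trm \<Rightarrow> trm \<Rightarrow> bool" (infixl "\<leadsto>\<^sub>U" 50) where
  ured_head: "M \<rightarrow>\<^sub>h M' \<Longrightarrow> M \<leadsto>\<^sub>U M'"
| ured_lam: "hnormal (Lam P) \<Longrightarrow> P \<leadsto>\<^sub>U P' \<Longrightarrow> Lam P \<leadsto>\<^sub>U Lam P'"
| ured_appL: "hnormal (App P Q) \<Longrightarrow> P \<leadsto>\<^sub>U P' \<Longrightarrow> App P Q \<leadsto>\<^sub>U App P' Q"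
| ured_appR: "hnormal (App P Q) \<Longrightarrow> Q \<leadsto>\<^sub>U Q' \<Longrightarrow> App P Q \<leadsto>\<^sub>U App P Q'"

inductive var_app :: "trm \<Rightarrow> bool" where
  "var_app (Var x)"
| "var_app M \<Longrightarrow> var_app (App M N)"

inductive hnf :: "trm \<Rightarrow> bool" where
  "var_app M \<Longrightarrow> hnf M"
| "hnf M \<Longrightarrow> hnf (Lam M)"

datatype ptrm = POmega | PVar nat | PLam ptrm | PApp ptrm ptrm

fun pnf :: "trm \<Rightarrow> ptrm" where
  "pnf (Var x) = PVar x"
| "pnf (Lam M) = (if hnf (Lam M) then PLam (pnf M) else POmega)"
| "pnf (App M N) = (if hnf (App M N) then PApp (pnf M) (pnf N) else POmega)"

end

theory Submission
  imports Defs
begin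

text \<open>Head normal forms have no head redex and are preserved by \<beta>, and a \<beta>-step
  that is not a head step cannot create a head normal form. So if \<open>M \<rightarrow>\<^sub>\<beta> M'\<close> is not
  a \<open>\<leadsto>\<^sub>U\<close>-step, either neither side is a head normal form and both partial normal
  forms are \<open>\<Omega>\<close>, or \<open>M\<close> is head normal; then \<open>\<leadsto>\<^sub>U\<close> descends into the reduced
  subterm, whose step is therefore not a \<open>\<leadsto>\<^sub>U\<close>-step either, and induction on the
  \<beta>-step concludes.\<close>

lemma var_app_Var [simp]: "var_app (Var x)"
  by (rule var_app.intros)

lemma var_app_Lam [simp]: "\<not> var_app (Lam t)"
  by (auto elim: var_app.cases)

lemma var_app_App [simp]: "var_app (App t u) \<longleftrightarrow> var_app t"
  by (auto elim: var_app.cases intro: var_app.intros)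

lemma hnf_Var [simp]: "hnf (Var x)"
  by (simp add: hnf.intros)

lemma hnf_Lam [simp]: "hnf (Lam t) \<longleftrightarrow> hnf t"
  by (auto elim: hnf.cases intro: hnf.intros)

lemma hnf_App [simp]: "hnf (App t u) \<longleftrightarrow> var_app t"
  by (auto elim: hnf.cases intro: hnf.intros)

lemma pnf_not_hnf: "\<not> hnf M \<Longrightarrow> pnf M = POmega"
  by (cases M) simp_all

lemma hred_not_hnf: "M \<rightarrow>\<^sub>h M' \<Longrightarrow> \<not> hnf M"
  by (induction rule: hred.induct) (auto intro: hnf.intros)

lemma hnf_hnormal: "hnf M \<Longrightarrow> hnormal M"
  unfolding hnormal_def using hred_not_hnf by blast

lemma var_app_beta: "M \<rightarrow>\<^sub>\<beta> M' \<Longrightarrow> var_app M \<Longrightarrow> var_app M'"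
  by (induction rule: beta.induct) auto

lemma hnf_beta: "M \<rightarrow>\<^sub>\<beta> M' \<Longrightarrow> hnf M \<Longrightarrow> hnf M'"
  by (induction rule: beta.induct) (auto intro: var_app_beta)

lemma var_app_beta_reflect:
  "M \<rightarrow>\<^sub>\<beta> M' \<Longrightarrow> \<not> M \<rightarrow>\<^sub>h M' \<Longrightarrow> var_app M' \<Longrightarrow> var_app M"
  by (induction rule: beta.induct) (auto intro: hred.intros)

lemma hnf_beta_reflect: "M \<rightarrow>\<^sub>\<beta> M' \<Longrightarrow> \<not> M \<rightarrow>\<^sub>h M' \<Longrightarrow> hnf M' \<Longrightarrow> hnf M"
proof (induction rule: beta.induct)
  case (beta_appL t t' u)
  then show ?case using var_app_beta_reflect beta.beta_appL by fastforce
qed (auto intro: hred.intros)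

lemma pnf_beta_not_hnf:
  assumes "M \<rightarrow>\<^sub>\<beta> M'" and "\<not> M \<leadsto>\<^sub>U M'" and "\<not> hnf M"
  shows "pnf M = pnf M'"
proof -
  have "\<not> hnf M'"
    using assms hnf_beta_reflect ured_head by blast
  then show ?thesis
    using \<open>\<not> hnf M\<close> by (simp add: pnf_not_hnf)
qed

theorem mainTheorem16:
  assumes "M \<rightarrow>\<^sub>\<beta> M'"
    and "\<not> (M \<leadsto>\<^sub>U M')"
  shows "pnf M = pnf M'"
  using assms
proof (induction rule: beta.induct)
  case (beta_root t s)
  then show ?case using hred_root ured_head by blast
next
  case (beta_appL t t' u)
  show ?case
  proof (cases "hnf (App t u)")
    case True
    with beta_appL show ?thesis
      using ured_appL[OF hnf_hnormal] by (auto intro: var_app_beta hnf.intros)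
  qed (use beta_appL beta.beta_appL pnf_beta_not_hnf in blast)
next
  case (beta_appR u u' t)
  show ?case
  proof (cases "hnf (App t u)")
    case True
    with beta_appR show ?thesis using ured_appR[OF hnf_hnormal] by auto
  qed (use beta_appR beta.beta_appR pnf_beta_not_hnf in blast)
next
  case (beta_lam t t')
  show ?case
  proof (cases "hnf (Lam t)")
    case True
    with beta_lam show ?thesis using hnf_beta ured_lam[OF hnf_hnormal] by auto
  qed (use beta_lam beta.beta_lam pnf_beta_not_hnf in blast)
qed

end
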